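(* There is no constant $c$ such that every graph in the class $\mathcal{R}_3$ is $c$-colorable.
   Context: All graphs are finite and simple. For a word $w$ and distinct letters $x,y$ occurring in $w$, $x$ and $y$ alternate in $w$ if deleting all letters other than copies of $x$ and $y$ yields a word of the form $xyxy\cdots$ or $yxyx\cdots$ (of even or odd length). A graph $G=(V,E)$ is word-representable if there is a word $w$ over $V$ (each vertex occurring in $w$) such that for all distinct $x,y\in V$, $x$ and $y$ alternate in $w$ iff $(x,y)\in E$. A word is $k$-uniform if each letter occurs exactly $k$ times; $G$ is $k$-word-representable if some $k$-uniform word represents it; the representation number of a word-representable graph is the least such $k$. $\mathcal{R}_3$ is the class of word-representable graphs with representation number exactly $3$. *)

theory Defs
  imports Main
begin

text \<open>Finite simple graphs with vertices drawn from nat (every finite graph is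
isomorphic to one of these): a finite vertex set V and a symmetric irreflexive
edge relation E on V.\<close>

definition simple_graph :: "nat set \<Rightarrow> (nat \<times> nat) set \<Rightarrow> bool" where
  "simple_graph V E \<longleftrightarrow> finite V \<and> E \<subseteq> V \<times> V \<and> sym E \<and> irrefl E"

definition alternate :: "nat list \<Rightarrow> nat \<Rightarrow> nat \<Rightarrow> bool" where
  "alternate w x y \<longleftrightarrow>
     (let u = filter (\<lambda>z. z = x \<or> z = y) w in
        \<forall>i. Suc i < length u \<longrightarrow> u ! i \<noteq> u ! Suc i)"

definition represents :: "nat list \<Rightarrow> nat set \<Rightarrow> (nat \<times> nat) set \<Rightarrow> bool" where
  "represents w V E \<longleftrightarrow> set w = V \<and>
     (\<forall>x\<in>V. \<forall>y\<in>V. x \<noteq> y \<longrightarrow> (alternate w x y \<longleftrightarrow> (x, y) \<in> E))"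

definition word_representable :: "nat set \<Rightarrow> (nat \<times> nat) set \<Rightarrow> bool" where
  "word_representable V E \<longleftrightarrow> (\<exists>w. represents w V E)"

definition uniform :: "nat \<Rightarrow> nat list \<Rightarrow> bool" where
  "uniform k w \<longleftrightarrow> (\<forall>x\<in>set w. count_list w x = k)"

definition k_word_representable :: "nat \<Rightarrow> nat set \<Rightarrow> (nat \<times> nat) set \<Rightarrow> bool" where
  "k_word_representable k V E \<longleftrightarrow> (\<exists>w. uniform k w \<and> represents w V E)"

definition representation_number :: "nat set \<Rightarrow> (nat \<times> nat) set \<Rightarrow> nat" where
  "representation_number V E = (LEAST k. k_word_representable k V E)"

definition in_R3 :: "nat set \<Rightarrow> (nat \<times> nat) set \<Rightarrow> bool" where
  "in_R3 V E \<longleftrightarrow> simple_graph V E \<and> word_representable V E \<and> representation_number V E = 3"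

definition colorable :: "nat \<Rightarrow> nat set \<Rightarrow> (nat \<times> nat) set \<Rightarrow> bool" where
  "colorable c V E \<longleftrightarrow> (\<exists>f :: nat \<Rightarrow> nat. (\<forall>v\<in>V. f v < c) \<and> (\<forall>(x, y)\<in>E. f x \<noteq> f y))"

end

theory Submission
  imports Defs
begin

text \<open>
  In a 2-uniform word each letter x occupies two positions p x < q x, and two letters
  alternate iff their intervals [p x, q x] cross, so 2-word-representable graphs are circle
  graphs. The triangular prism is not one: once the intervals of one triangle are placed, each
  matching edge must cross exactly one of them, and the admissible slots leave no room for the
  other triangle to cross pairwise. Since k-representability passes to induced subgraphs, the
  disjoint union of the prism with a clique on n vertices, represented by the prism's 3-uniform
  word followed by three copies of a permutation of the clique, has representation number 3,
  yet needs n colours.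
\<close>

lemma filter_conv_map_nth:
  "filter P w = map (nth w) (filter (\<lambda>i. P (w ! i)) [0..<length w])"
  by (subst (1) map_nth[symmetric]) (simp add: filter_map comp_def)

lemma alternate_iff_distinct_adj:
  "alternate w x y \<longleftrightarrow> distinct_adj (filter (\<lambda>z. z = x \<or> z = y) w)"
  by (simp add: alternate_def Let_def distinct_adj_conv_nth)

lemma alternate_commute: "alternate w x y \<longleftrightarrow> alternate w y x"
  by (simp add: alternate_iff_distinct_adj disj_commute)

lemma represents_alternate_iff:
  "represents w V E \<Longrightarrow> x \<in> V \<Longrightarrow> y \<in> V \<Longrightarrow> x \<noteq> y \<Longrightarrow> alternate w x y \<longleftrightarrow> (x, y) \<in> E"
  by (simp add: represents_def)

lemma alternate_filter:
  assumes "P x" "P y"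
  shows "alternate (filter P w) x y \<longleftrightarrow> alternate w x y"
proof -
  have "filter (\<lambda>z. z = x \<or> z = y) (filter P w) = filter (\<lambda>z. z = x \<or> z = y) w"
    unfolding filter_filter using assms by (intro filter_cong) auto
  then show ?thesis by (simp add: alternate_iff_distinct_adj)
qed

lemma alternate_append_left:
  assumes "x \<notin> set w2" "y \<notin> set w2"
  shows "alternate (w1 @ w2) x y \<longleftrightarrow> alternate w1 x y"
proof -
  have "filter (\<lambda>z. z = x \<or> z = y) w2 = []"
    using assms by (auto simp: filter_empty_conv)
  then show ?thesis by (simp add: alternate_iff_distinct_adj)
qed

lemma alternate_append_right:
  assumes "x \<notin> set w1" "y \<notin> set w1"
  shows "alternate (w1 @ w2) x y \<longleftrightarrow> alternate w2 x y"
proof -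
  have "filter (\<lambda>z. z = x \<or> z = y) w1 = []"
    using assms by (auto simp: filter_empty_conv)
  then show ?thesis by (simp add: alternate_iff_distinct_adj)
qed

lemma not_alternate_append:
  assumes "y \<notin> set w1" "2 \<le> count_list w1 x"
  shows "\<not> alternate (w1 @ w2) x y"
proof -
  obtain n where n: "count_list w1 x = Suc (Suc n)"
    using le_Suc_ex[OF assms(2)] by auto
  have "filter (\<lambda>z. z = x \<or> z = y) w1 = filter ((=) x) w1"
    using assms(1) by (intro filter_cong) auto
  also have "\<dots> = replicate (count_list w1 x) x"
    by (simp add: count_list_eq_length_filter replicate_length_same)
  also have "\<dots> = x # x # replicate n x"
    using n by simp
  finally show ?thesis
    by (simp add: alternate_iff_distinct_adj)
qed

section \<open>Uniform representations\<close>

lemma count_list_filter: "P x \<Longrightarrow> count_list (filter P w) x = count_list w x"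
  by (induction w) auto

lemma count_list_distinct: "distinct xs \<Longrightarrow> x \<in> set xs \<Longrightarrow> count_list xs x = 1"
  by (induction xs) auto

lemma uniform_append:
  "uniform k w1 \<Longrightarrow> uniform k w2 \<Longrightarrow> set w1 \<inter> set w2 = {} \<Longrightarrow> uniform k (w1 @ w2)"
  unfolding uniform_def by (auto simp: disjoint_iff count_list_0_iff)

lemma k_word_representable_0: "k_word_representable 0 V E \<Longrightarrow> V = {}"
  unfolding k_word_representable_def uniform_def represents_def
  by (metis count_list_0_iff equals0I)

lemma k_word_representable_induced:
  assumes "k_word_representable k V E" "A \<subseteq> V"
  shows "k_word_representable k A (E \<inter> A \<times> A)"
proof -
  obtain w where w: "uniform k w" "represents w V E"
    using assms(1) unfolding k_word_representable_def by blast
  let ?w = "filter (\<lambda>z. z \<in> A) w"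
  have "uniform k ?w"
    using w(1) by (simp add: uniform_def count_list_filter)
  moreover have "set ?w = A"
    using w(2) assms(2) unfolding represents_def by auto
  moreover have "alternate ?w x y \<longleftrightarrow> (x, y) \<in> E \<inter> A \<times> A"
    if "x \<in> A" "y \<in> A" "x \<noteq> y" for x y
  proof -
    have "x \<in> V" "y \<in> V" using that assms(2) by auto
    then show ?thesis
      using that by (simp add: alternate_filter represents_alternate_iff[OF w(2)])
  qed
  ultimately show ?thesis
    unfolding k_word_representable_def represents_def by blast
qed

lemma representation_number_eqI:
  assumes "k_word_representable k V E" "\<And>j. j < k \<Longrightarrow> \<not> k_word_representable j V E"
  shows "representation_number V E = k"
  unfolding representation_number_def
  by (rule Least_equality) (use assms in \<open>auto simp: not_less[symmetric]\<close>)

lemma distinct_imp_distinct_adj: "distinct xs \<Longrightarrow> distinct_adj xs"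
  by (induction xs) (auto simp: distinct_adj_Cons)

lemma uniform_1_distinct: "uniform 1 w \<Longrightarrow> distinct w"
proof (induction w)
  case (Cons a w)
  then have "a \<notin> set w"
    unfolding uniform_def by (simp add: count_list_0_iff[symmetric])
  moreover have "uniform 1 w"
    unfolding uniform_def
  proof
    fix x assume "x \<in> set w"
    have "count_list (a # w) x = 1"
      using Cons.prems \<open>x \<in> set w\<close> unfolding uniform_def by simp
    then show "count_list w x = 1"
      using \<open>x \<in> set w\<close> \<open>a \<notin> set w\<close> by (auto split: if_splits)
  qed
  ultimately show ?case using Cons.IH by simp
qed simp

lemma uniform_1_alternate: "uniform 1 w \<Longrightarrow> alternate w x y"
  by (simp add: alternate_iff_distinct_adj distinct_imp_distinct_adj uniform_1_distinct)

lemma represents_append: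
  assumes w1: "represents w1 V1 E1" "E1 \<subseteq> V1 \<times> V1"
    and w2: "represents w2 V2 E2" "E2 \<subseteq> V2 \<times> V2"
    and "V1 \<inter> V2 = {}" and repeated: "\<And>x. x \<in> V1 \<Longrightarrow> 2 \<le> count_list w1 x"
  shows "represents (w1 @ w2) (V1 \<union> V2) (E1 \<union> E2)"
proof -
  have set: "set w1 = V1" "set w2 = V2"
    using w1(1) w2(1) by (simp_all add: represents_def)
  have cross: "\<not> alternate (w1 @ w2) x y" if "x \<in> V1" "y \<in> V2" for x y
  proof -
    have "y \<notin> set w1"
      using that \<open>V1 \<inter> V2 = {}\<close> set by auto
    then show ?thesis by (rule not_alternate_append[OF _ repeated[OF \<open>x \<in> V1\<close>]])
  qed
  have "alternate (w1 @ w2) x y \<longleftrightarrow> (x, y) \<in> E1 \<union> E2"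
    if xy: "x \<in> V1 \<union> V2" "y \<in> V1 \<union> V2" and "x \<noteq> y" for x y
  proof -
    consider "x \<in> V1" "y \<in> V1" | "x \<in> V2" "y \<in> V2" | "x \<in> V1" "y \<in> V2" | "x \<in> V2" "y \<in> V1"
      using xy by blast
    then show ?thesis
    proof cases
      case 1
      then have "x \<notin> V2" "y \<notin> V2" using \<open>V1 \<inter> V2 = {}\<close> by auto
      then show ?thesis
        using w2(2) alternate_append_left[of x w2 y w1] represents_alternate_iff[OF w1(1) 1 \<open>x \<noteq> y\<close>]
        unfolding set by auto
    next
      case 2
      then have "x \<notin> V1" "y \<notin> V1" using \<open>V1 \<inter> V2 = {}\<close> by auto
      then show ?thesis
        using w1(2) alternate_append_right[of x w1 y w2] represents_alternate_iff[OF w2(1) 2 \<open>x \<noteq> y\<close>]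
        unfolding set by auto
    next
      case 3
      then show ?thesis
        using cross \<open>V1 \<inter> V2 = {}\<close> w1(2) w2(2) by blast
    next
      case 4
      then show ?thesis
        using cross[of y x] alternate_commute \<open>V1 \<inter> V2 = {}\<close> w1(2) w2(2) by blast
    qed
  qed
  then show ?thesis
    unfolding represents_def using set by auto
qed

definition complete_edges :: "'a set \<Rightarrow> ('a \<times> 'a) set" where
  "complete_edges A = {(x, y). x \<in> A \<and> y \<in> A \<and> x \<noteq> y}"

lemma distinct_adj_concat_replicate:
  assumes "s \<noteq> t"
  shows "distinct_adj (concat (replicate k [s, t]))"
proof (induction k)
  case (Suc k)
  then show ?case
    using assms by (cases k) (auto simp: distinct_adj_Cons)
qed simp

lemma clique_word_represents:
  assumes "distinct xs" "0 < k"
  shows "uniform k (concat (replicate k xs))"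
    and "represents (concat (replicate k xs)) (set xs) (complete_edges (set xs))"
proof -
  let ?w = "concat (replicate k xs)"
  show "uniform k ?w"
    using assms by (simp add: uniform_def count_list_concat sum_list_replicate count_list_distinct)
  have "alternate ?w x y" if "x \<in> set xs" "y \<in> set xs" "x \<noteq> y" for x y
  proof -
    let ?P = "\<lambda>z. z = x \<or> z = y"
    have "distinct (filter ?P xs)" "set (filter ?P xs) = {x, y}"
      using assms(1) that by auto
    then have "length (filter ?P xs) = 2"
      using distinct_card \<open>x \<noteq> y\<close> by fastforce
    then obtain s t where st: "filter ?P xs = [s, t]"
      by (auto simp: length_Suc_conv numeral_2_eq_2)
    then have "s \<noteq> t"
      using \<open>distinct (filter ?P xs)\<close> by simp
    have "filter ?P ?w = concat (replicate k [s, t])"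
      by (simp add: filter_concat st)
    then show ?thesis
      using distinct_adj_concat_replicate[OF \<open>s \<noteq> t\<close>] by (simp add: alternate_iff_distinct_adj)
  qed
  moreover have "set ?w = set xs"
    using assms(2) by simp
  ultimately show "represents ?w (set xs) (complete_edges (set xs))"
    unfolding represents_def complete_edges_def by auto
qed

section \<open>Two-uniform words and overlap models\<close>

definition positions :: "'a list \<Rightarrow> 'a \<Rightarrow> nat set" where
  "positions w x = {i. i < length w \<and> w ! i = x}"

lemma nth_of_mem_positions: "i \<in> positions w x \<Longrightarrow> w ! i = x"
  by (simp add: positions_def)

lemma card_positions: "card (positions w x) = count_list w x"
  by (simp add: positions_def count_list_eq_length_filter length_filter_conv_card eq_commute)

lemma positions_of_count_2:
  assumes "count_list w x = 2"
  shows "\<exists>a b. a < b \<and> positions w x = {a, b}"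
proof -
  obtain a b where ab: "positions w x = {a, b}" "a \<noteq> b"
    using assms card_2_iff card_positions by metis
  show ?thesis
  proof (cases "a < b")
    case True
    then show ?thesis using ab by blast
  next
    case False
    then have "b < a" using ab(2) by simp
    then show ?thesis using ab(1) by (auto simp: insert_commute)
  qed
qed

definition crossing :: "nat \<Rightarrow> nat \<Rightarrow> nat \<Rightarrow> nat \<Rightarrow> bool" where
  "crossing a b c d \<longleftrightarrow> a < c \<and> c < b \<and> b < d \<or> c < a \<and> a < d \<and> d < b"

lemma crossing_commute: "crossing a b c d \<longleftrightarrow> crossing c d a b"
  unfolding crossing_def by auto

lemma alternate_iff_crossing_first_before:
  assumes x: "positions w x = {a, b}" "a < b"
    and y: "positions w y = {c, d}" "c < d"
    and "x \<noteq> y" "a < c"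
  shows "alternate w x y \<longleftrightarrow> crossing a b c d"
proof -
  let ?I = "filter (\<lambda>i. w ! i = x \<or> w ! i = y) [0..<length w]"
  have alt: "alternate w x y \<longleftrightarrow> distinct_adj (map (nth w) ?I)"
    unfolding alternate_iff_distinct_adj by (subst filter_conv_map_nth) simp
  have "set ?I = positions w x \<union> positions w y"
    by (auto simp: positions_def)
  then have set_I: "set ?I = {a, b, c, d}"
    using x y by auto
  have sorted_I: "sorted ?I" "distinct ?I"
    by (auto intro: sorted_wrt_filter)
  have nth: "w ! a = x" "w ! b = x" "w ! c = y" "w ! d = y"
    using x y by (simp_all add: nth_of_mem_positions)
  have "b \<noteq> c" "b \<noteq> d" using nth \<open>x \<noteq> y\<close> by auto
  then consider "b < c" | "c < b" "b < d" | "d < b" by linarith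
  then show ?thesis
  proof cases
    case 1
    then have "?I = [a, b, c, d]"
      using sorted_distinct_set_unique[OF sorted_I, of "[a, b, c, d]"] set_I x y by simp
    then show ?thesis using 1 nth assms(2,4-6) by (simp add: alt crossing_def)
  next
    case 2
    then have "?I = [a, c, b, d]"
      using sorted_distinct_set_unique[OF sorted_I, of "[a, c, b, d]"] set_I x y \<open>a < c\<close>
      by (simp add: insert_commute)
    then show ?thesis using 2 nth assms(2,4-6) by (simp add: alt crossing_def)
  next
    case 3
    then have "?I = [a, c, d, b]"
      using sorted_distinct_set_unique[OF sorted_I, of "[a, c, d, b]"] set_I x y \<open>a < c\<close>
      by (simp add: insert_commute)
    then show ?thesis using 3 nth assms(2,4-6) by (simp add: alt crossing_def)
  qed
qed

lemma alternate_iff_crossing: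
  assumes x: "positions w x = {a, b}" "a < b"
    and y: "positions w y = {c, d}" "c < d"
    and "x \<noteq> y"
  shows "alternate w x y \<longleftrightarrow> crossing a b c d"
proof (cases "a < c")
  case True
  then show ?thesis by (rule alternate_iff_crossing_first_before[OF assms])
next
  case False
  have "w ! a = x" "w ! c = y"
    using x y by (simp_all add: nth_of_mem_positions)
  then have "c < a" using False \<open>x \<noteq> y\<close> by (cases "a = c") auto
  then show ?thesis
    using alternate_iff_crossing_first_before[OF y x \<open>x \<noteq> y\<close>[symmetric]]
    by (simp add: alternate_commute crossing_commute)
qed

definition overlap_model :: "('a \<Rightarrow> nat) \<Rightarrow> ('a \<Rightarrow> nat) \<Rightarrow> 'a set \<Rightarrow> ('a \<times> 'a) set \<Rightarrow> bool" where
  "overlap_model p q V E \<longleftrightarrow>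
     (\<forall>x\<in>V. p x < q x) \<and>
     (\<forall>x\<in>V. \<forall>y\<in>V. x \<noteq> y \<longrightarrow> p x \<noteq> p y \<and> p x \<noteq> q y \<and> q x \<noteq> q y) \<and>
     (\<forall>x\<in>V. \<forall>y\<in>V. x \<noteq> y \<longrightarrow> ((x, y) \<in> E \<longleftrightarrow> crossing (p x) (q x) (p y) (q y)))"

definition nested_or_disjoint :: "nat \<Rightarrow> nat \<Rightarrow> nat \<Rightarrow> nat \<Rightarrow> bool" where
  "nested_or_disjoint a b c d \<longleftrightarrow> b < c \<or> d < a \<or> a < c \<and> d < b \<or> c < a \<and> b < d"

lemma overlap_model_less: "overlap_model p q V E \<Longrightarrow> x \<in> V \<Longrightarrow> p x < q x"
  unfolding overlap_model_def by blast

lemma overlap_modelD: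
  assumes "overlap_model p q V E" "x \<in> V" "y \<in> V" "x \<noteq> y"
  shows "p x \<noteq> p y" "p x \<noteq> q y" "q x \<noteq> q y"
    and "(x, y) \<in> E \<longleftrightarrow> crossing (p x) (q x) (p y) (q y)"
  using assms unfolding overlap_model_def by auto

lemma overlap_model_edge:
  assumes "overlap_model p q V E" "x \<in> V" "y \<in> V" "x \<noteq> y" "(x, y) \<in> E"
  shows "crossing (p x) (q x) (p y) (q y)"
  using overlap_modelD(4)[OF assms(1-4)] assms(5) by blast

lemma overlap_model_non_edge:
  assumes "overlap_model p q V E" "x \<in> V" "y \<in> V" "x \<noteq> y" "(x, y) \<notin> E"
  shows "nested_or_disjoint (p x) (q x) (p y) (q y)"
proof -
  have "\<not> crossing (p x) (q x) (p y) (q y)"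
    using overlap_modelD(4)[OF assms(1-4)] assms(5) by blast
  then show ?thesis
    using overlap_model_less[OF assms(1)] assms(2,3)
      overlap_modelD(1-3)[OF assms(1-4)] overlap_modelD(1-3)[OF assms(1,3,2) assms(4)[symmetric]]
    unfolding crossing_def nested_or_disjoint_def by linarith
qed

lemma two_uniform_overlap_model:
  assumes "uniform 2 w" "represents w V E"
  shows "\<exists>p q. overlap_model p q V E"
proof -
  have count: "count_list w x = 2" if "x \<in> V" for x
    using assms that by (simp add: uniform_def represents_def)
  have "\<forall>x\<in>V. \<exists>a b. a < b \<and> positions w x = {a, b}"
    using positions_of_count_2[OF count] by blast
  then obtain p q where pq: "\<And>x. x \<in> V \<Longrightarrow> p x < q x"
    and pos: "\<And>x. x \<in> V \<Longrightarrow> positions w x = {p x, q x}"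
    by metis
  have endpoints: "p x \<noteq> p y \<and> p x \<noteq> q y \<and> q x \<noteq> q y"
    if "x \<in> V" "y \<in> V" "x \<noteq> y" for x y
  proof -
    have "w ! p x = x" "w ! q x = x" "w ! p y = y" "w ! q y = y"
      using pos[OF \<open>x \<in> V\<close>] pos[OF \<open>y \<in> V\<close>] by (simp_all add: nth_of_mem_positions)
    then show ?thesis
      using \<open>x \<noteq> y\<close> by auto
  qed
  have edges: "(x, y) \<in> E \<longleftrightarrow> crossing (p x) (q x) (p y) (q y)"
    if "x \<in> V" "y \<in> V" "x \<noteq> y" for x y
    using alternate_iff_crossing[OF pos[OF that(1)] pq[OF that(1)] pos[OF that(2)] pq[OF that(2)] that(3)]
      represents_alternate_iff[OF assms(2) that]
    by simp
  have "overlap_model p q V E"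
    unfolding overlap_model_def by (simp add: pq endpoints edges)
  then show ?thesis by blast
qed

section \<open>The triangular prism\<close>

text \<open>The triangular prism: vertex x stands for (x div 3, x mod 3) in the product of an edge and a
  triangle, so the triangles are {0, 1, 2} and {3, 4, 5} and the matching is x -- x + 3.\<close>

definition prism_edges :: "(nat \<times> nat) set" where
  "prism_edges = {(x, y). x < 6 \<and> y < 6 \<and> x \<noteq> y \<and> (x div 3 = y div 3 \<or> x mod 3 = y mod 3)}"

lemma prism_edge_iff:
  assumes "a < 3" "b < 3"
  shows "(a, b) \<in> prism_edges \<longleftrightarrow> a \<noteq> b"
    and "(a + 3, b + 3) \<in> prism_edges \<longleftrightarrow> a \<noteq> b"
    and "(a, b + 3) \<in> prism_edges \<longleftrightarrow> a = b"
  using assms by (auto simp: prism_edges_def div_add_self2)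

lemma prism_no_overlap_model_sorted:
  assumes M: "overlap_model p q {0..<6} prism_edges"
    and "a < 3" "b < 3" "c < 3" and abc: "p a < p b" "p b < p c"
  shows False
proof -
  have V: "a \<in> {0..<6}" "b \<in> {0..<6}" "c \<in> {0..<6}"
    "a + 3 \<in> {0..<6}" "b + 3 \<in> {0..<6}" "c + 3 \<in> {0..<6}"
    using \<open>a < 3\<close> \<open>b < 3\<close> \<open>c < 3\<close> by auto
  have "a \<noteq> b" "a \<noteq> c" "b \<noteq> c" using abc by auto
  have cross:
    "crossing (p a) (q a) (p b) (q b)" "crossing (p a) (q a) (p c) (q c)" "crossing (p b) (q b) (p c) (q c)"
    "crossing (p (a + 3)) (q (a + 3)) (p (b + 3)) (q (b + 3))"
    "crossing (p (a + 3)) (q (a + 3)) (p (c + 3)) (q (c + 3))"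
    "crossing (p (b + 3)) (q (b + 3)) (p (c + 3)) (q (c + 3))"
    "crossing (p a) (q a) (p (a + 3)) (q (a + 3))"
    "crossing (p b) (q b) (p (b + 3)) (q (b + 3))"
    "crossing (p c) (q c) (p (c + 3)) (q (c + 3))"
    using \<open>a \<noteq> b\<close> \<open>a \<noteq> c\<close> \<open>b \<noteq> c\<close> \<open>a < 3\<close> \<open>b < 3\<close> \<open>c < 3\<close>
    by (auto intro!: overlap_model_edge[OF M] V simp: prism_edge_iff)
  have apart:
    "nested_or_disjoint (p a) (q a) (p (b + 3)) (q (b + 3))" "nested_or_disjoint (p a) (q a) (p (c + 3)) (q (c + 3))"
    "nested_or_disjoint (p b) (q b) (p (a + 3)) (q (a + 3))" "nested_or_disjoint (p b) (q b) (p (c + 3)) (q (c + 3))"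
    "nested_or_disjoint (p c) (q c) (p (a + 3)) (q (a + 3))" "nested_or_disjoint (p c) (q c) (p (b + 3)) (q (b + 3))"
    using \<open>a \<noteq> b\<close> \<open>a \<noteq> c\<close> \<open>b \<noteq> c\<close> \<open>a < 3\<close> \<open>b < 3\<close> \<open>c < 3\<close>
    by (auto intro!: overlap_model_non_edge[OF M] V simp: prism_edge_iff)
  have intervals: "p a < q a" "p b < q b" "p c < q c"
    "p (a + 3) < q (a + 3)" "p (b + 3) < q (b + 3)" "p (c + 3) < q (c + 3)"
    using V by (simp_all add: overlap_model_less[OF M])
  have triangle: "p c < q a" "q a < q b" "q b < q c"
    using cross(1-3) abc intervals unfolding crossing_def by linarith+
  txt \<open>The interval of
    a + 3 must cross that of a and be nested in or disjoint from those of b and c, which leaves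
    only the following slots; likewise for b + 3 and c + 3.\<close>
  have place_a: "p (a + 3) < p a \<and> p a < q (a + 3) \<and> q (a + 3) < p b
      \<or> p c < p (a + 3) \<and> p (a + 3) < q a \<and> q a < q (a + 3) \<and> q (a + 3) < q b
      \<or> p a < p (a + 3) \<and> p (a + 3) < p b \<and> q c < q (a + 3)"
    using cross(7) apart(3,5) abc triangle intervals
    unfolding crossing_def nested_or_disjoint_def by linarith
  have place_b: "p a < p (b + 3) \<and> p (b + 3) < p b \<and> p b < q (b + 3) \<and> q (b + 3) < p c
      \<or> q a < p (b + 3) \<and> p (b + 3) < q b \<and> q b < q (b + 3) \<and> q (b + 3) < q c"
    using cross(8) apart(1,6) abc triangle intervals
    unfolding crossing_def nested_or_disjoint_def by linarith
  have place_c: "p b < p (c + 3) \<and> p (c + 3) < p c \<and> p c < q (c + 3) \<and> q (c + 3) < q a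
      \<or> q b < p (c + 3) \<and> p (c + 3) < q c \<and> q c < q (c + 3)
      \<or> p (c + 3) < p a \<and> q b < q (c + 3) \<and> q (c + 3) < q c"
    using cross(9) apart(2,4) abc triangle intervals
    unfolding crossing_def nested_or_disjoint_def by linarith
  show False
    using place_a place_b place_c cross(4-6) abc triangle intervals
    unfolding crossing_def by (elim disjE) linarith+
qed

lemma prism_no_overlap_model: "\<not> overlap_model p q {0..<6} prism_edges"
proof
  assume M: "overlap_model p q {0..<6} prism_edges"
  have "p 0 \<noteq> p 1" "p 0 \<noteq> p 2" "p 1 \<noteq> p 2"
    by (simp_all add: overlap_modelD(1)[OF M])
  then consider "p 0 < p 1" "p 1 < p 2" | "p 0 < p 2" "p 2 < p 1" | "p 1 < p 0" "p 0 < p 2"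
    | "p 1 < p 2" "p 2 < p 0" | "p 2 < p 0" "p 0 < p 1" | "p 2 < p 1" "p 1 < p 0"
    by atomize_elim linarith
  then show False
    by cases (erule (1) prism_no_overlap_model_sorted[OF M, rotated 3]; simp)+
qed

lemma prism_not_k_word_representable:
  assumes "k < 3"
  shows "\<not> k_word_representable k {0..<6} prism_edges"
proof
  assume rep: "k_word_representable k {0..<6} prism_edges"
  then obtain w where w: "uniform k w" "represents w {0..<6} prism_edges"
    unfolding k_word_representable_def by blast
  consider "k = 0" | "k = 1" | "k = 2" using assms by linarith
  then show False
  proof cases
    case 1
    then show False using rep by (auto dest: k_word_representable_0)
  next
    case 2
    have "(0, 4) \<notin> prism_edges" by (simp add: prism_edges_def)
    then show False
      using uniform_1_alternate[of w 0 4] represents_alternate_iff[OF w(2), of 0 4] w(1) 2 by simp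
  next
    case 3
    then show False
      using two_uniform_overlap_model[OF _ w(2)] w(1) prism_no_overlap_model by blast
  qed
qed

definition prism_word :: "nat list" where
  "prism_word = [0, 1, 2, 3, 0, 4, 1, 5, 2, 3, 0, 4, 5, 3, 1, 4, 2, 5]"

lemma prism_word_represents:
  "uniform 3 prism_word" "represents prism_word {0..<6} prism_edges"
proof -
  have six: "{0..<6} = {0, 1, 2, 3, 4, 5 :: nat}" by auto
  show "uniform 3 prism_word"
    by (simp add: uniform_def prism_word_def)
  have "set prism_word = {0..<6}"
    by (auto simp: prism_word_def)
  moreover have "\<forall>x\<in>{0..<6}. \<forall>y\<in>{0..<6}. x \<noteq> y \<longrightarrow> alternate prism_word x y \<longleftrightarrow> (x, y) \<in> prism_edges"
    unfolding six by (simp add: prism_word_def alternate_iff_distinct_adj prism_edges_def)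
  ultimately show "represents prism_word {0..<6} prism_edges"
    unfolding represents_def by blast
qed

lemma colorable_clique_card_le:
  assumes "colorable c V E" "A \<subseteq> V" "complete_edges A \<subseteq> E"
  shows "card A \<le> c"
proof -
  obtain f :: "nat \<Rightarrow> nat" where f: "\<forall>v\<in>V. f v < c" "\<forall>(x, y)\<in>E. f x \<noteq> f y"
    using assms(1) unfolding colorable_def by blast
  have "inj_on f A"
    using f(2) assms(3) unfolding complete_edges_def by (auto intro: inj_onI)
  moreover have "f ` A \<subseteq> {..<c}"
    using f(1) assms(2) by auto
  ultimately show ?thesis
    using card_inj_on_le[of f A "{..<c}"] by simp
qed

lemma in_R3_prism_plus_clique:
  "in_R3 ({0..<6} \<union> {6..<n + 6}) (prism_edges \<union> complete_edges {6..<n + 6})"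
proof -
  let ?V = "{0..<6} \<union> {6..<n + 6}" and ?E = "prism_edges \<union> complete_edges {6..<n + 6}"
  let ?clique = "concat (replicate 3 [6..<n + 6])"
  have clique: "uniform 3 ?clique" "represents ?clique {6..<n + 6} (complete_edges {6..<n + 6})"
    using clique_word_represents[of "[6..<n + 6]" 3] by simp_all
  have "prism_edges \<subseteq> {0..<6} \<times> {0..<6}"
    "complete_edges {6..<n + 6} \<subseteq> {6..<n + 6} \<times> {6..<n + 6}"
    by (auto simp: prism_edges_def complete_edges_def)
  moreover have "2 \<le> count_list prism_word x" if "x \<in> {0..<6}" for x
    using prism_word_represents that by (simp add: uniform_def represents_def)
  ultimately have rep: "represents (prism_word @ ?clique) ?V ?E"
    using represents_append prism_word_represents(2) clique(2) by fastforce
  have "set prism_word \<inter> set ?clique = {}"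
    using prism_word_represents(2) by (auto simp: represents_def)
  then have "uniform 3 (prism_word @ ?clique)"
    by (rule uniform_append[OF prism_word_represents(1) clique(1)])
  with rep have "k_word_representable 3 ?V ?E"
    unfolding k_word_representable_def by blast
  moreover have "\<not> k_word_representable j ?V ?E" if "j < 3" for j
  proof
    assume "k_word_representable j ?V ?E"
    then have "k_word_representable j {0..<6} (?E \<inter> {0..<6} \<times> {0..<6})"
      by (rule k_word_representable_induced) auto
    moreover have "?E \<inter> {0..<6} \<times> {0..<6} = prism_edges"
      by (auto simp: prism_edges_def complete_edges_def)
    ultimately show False
      using prism_not_k_word_representable[OF that] by simp
  qed
  ultimately have "representation_number ?V ?E = 3"
    by (rule representation_number_eqI)
  moreover have "simple_graph ?V ?E"
    unfolding simple_graph_def sym_def irrefl_def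
    by (auto simp: prism_edges_def complete_edges_def)
  ultimately show ?thesis
    using rep unfolding in_R3_def word_representable_def by blast
qed

theorem theorem18:
  shows "\<not> (\<exists>c :: nat. \<forall>V E. in_R3 V E \<longrightarrow> colorable c V E)"
proof
  assume "\<exists>c :: nat. \<forall>V E. in_R3 V E \<longrightarrow> colorable c V E"
  then obtain c :: nat where "\<forall>V E. in_R3 V E \<longrightarrow> colorable c V E"
    by blast
  then have "colorable c ({0..<6} \<union> {6..<Suc c + 6}) (prism_edges \<union> complete_edges {6..<Suc c + 6})"
    using in_R3_prism_plus_clique by blast
  then have "card {6..<Suc c + 6} \<le> c"
    by (rule colorable_clique_card_le) auto
  then show False by simp
qed

end
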